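(* Let $d\ge2$, $R>0$ and let $A\subset\mathbb{R}^d$ be a body. The following are equivalent: (i) $A$ is an $R$-supported body and $\mathrm{Nor}(A,a)\cap S^{d-1}=\mathcal{N}_R(A,a)$ for every $a\in\partial A$; (ii) $\mathrm{reach}(A)\ge R$.
   Context: A body is a nonempty closed subset of $\mathbb{R}^d$; $S^{d-1}$ is the unit sphere; $B(x)=\{y:|y-x|<R\}$. For $a\in\partial A$, $\mathcal{N}_R(A,a)=\{v\in S^{d-1}: A\cap B(a+Rv)=\emptyset\}$; $A$ is $R$-supported if $\mathcal{N}_R(A,a)\ne\emptyset$ for all $a\in\partial A$. Tangent cone: $\mathrm{Tan}(A,q)=\{v: \forall\varepsilon>0\ \exists x\in A,\ |x-q|<\varepsilon,\ \exists r>0,\ |r(x-q)-v|<\varepsilon\}$; normal cone: $\mathrm{Nor}(A,q)=\{u:\langle u,v\rangle\le0\ \forall v\in\mathrm{Tan}(A,q)\}$. $\mathrm{Unp}(A)$ is the set of points with a unique nearest point in $A$; $\mathrm{reach}(A,a)=\sup\{\rho>0: \{x:|x-a|<\rho\}\subset\mathrm{Unp}(A)\}$, $\mathrm{reach}(A)=\inf_{a\in A}\mathrm{reach}(A,a)$. *)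

theory Defs
  imports "HOL-Analysis.Analysis"
begin

definition body :: "'a::euclidean_space set \<Rightarrow> bool" where
  "body A \<longleftrightarrow> A \<noteq> {} \<and> closed A"

definition NR :: "real \<Rightarrow> 'a::euclidean_space set \<Rightarrow> 'a \<Rightarrow> 'a set" where
  "NR R A a = {v. norm v = 1 \<and> A \<inter> ball (a + R *\<^sub>R v) R = {}}"

definition R_supported :: "real \<Rightarrow> 'a::euclidean_space set \<Rightarrow> bool" where
  "R_supported R A \<longleftrightarrow> body A \<and> (\<forall>a\<in>frontier A. NR R A a \<noteq> {})"

definition Tan :: "'a::euclidean_space set \<Rightarrow> 'a \<Rightarrow> 'a set" where
  "Tan A q = {v. \<forall>\<epsilon>>0. \<exists>x\<in>A. norm (x - q) < \<epsilon> \<and>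
                    (\<exists>r>0. norm (r *\<^sub>R (x - q) - v) < \<epsilon>)}"

definition Nor :: "'a::euclidean_space set \<Rightarrow> 'a \<Rightarrow> 'a set" where
  "Nor A q = {u. \<forall>v\<in>Tan A q. inner u v \<le> 0}"

definition Unp :: "'a::euclidean_space set \<Rightarrow> 'a set" where
  "Unp A = {x. \<exists>!a. a \<in> A \<and> (\<forall>b\<in>A. dist x a \<le> dist x b)}"

text \<open>Local reach, in the extended reals (may be \<infinity>; Sup of the empty set is -\<infinity>,
  which behaves like 0 for comparisons with positive R).\<close>
definition reach_at :: "'a::euclidean_space set \<Rightarrow> 'a \<Rightarrow> ereal" where
  "reach_at A a = Sup {ereal \<rho> | \<rho>. \<rho> > 0 \<and> ball a \<rho> \<subseteq> Unp A}"

definition reach :: "'a::euclidean_space set \<Rightarrow> ereal" where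
  "reach A = (INF a\<in>A. reach_at A a)"

end

theory Submission
  imports Defs
begin

text \<open>
  If every point within distance \<open>R\<close> of \<open>A\<close> has a unique nearest point
  \<open>\<xi> x = closest_point A x\<close>, then \<open>\<xi>\<close> is continuous there, and a Brouwer fixed point
  argument shows that \<open>\<xi> x\<close> remains the nearest point along the whole ray from \<open>\<xi> x\<close>
  through \<open>x\<close> up to distance \<open>R\<close>; hence the open \<open>R\<close>-ball touching \<open>A\<close> at \<open>\<xi> x\<close> in
  direction \<open>x - \<xi> x\<close> misses \<open>A\<close>. Limits of these balls give a supporting ball at every boundary point. For a unit normal \<open>v\<close> at \<open>a\<close>, the nearest
  points \<open>b\<close> of \<open>a + t v\<close> satisfy \<open>|b - a|\<^sup>2 \<le> 2 t \<langle>b - a, v\<rangle>\<close>, which together with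
  normality of \<open>v\<close> forces \<open>(b - a) / t \<rightarrow> 0\<close>, so the balls at \<open>b\<close> converge to the
  \<open>R\<close>-ball at \<open>a\<close> in direction \<open>v\<close>.

  Conversely, if \<open>x\<close> has a nearest point \<open>a\<close> at distance \<open>s < R\<close>, then \<open>(x - a) / s\<close> is a
  normal at \<open>a\<close>, so the \<open>R\<close>-ball touching \<open>A\<close> at \<open>a\<close> in that direction misses \<open>A\<close>; it
  contains the closed \<open>s\<close>-ball around \<open>x\<close> except for \<open>a\<close>, so \<open>a\<close> is the only nearest point.
\<close>

section \<open>Nearest points and reach\<close>

lemma nearest_iff_infdist:
  assumes "a \<in> A"
  shows "(\<forall>b\<in>A. dist x a \<le> dist x b) \<longleftrightarrow> dist x a = infdist x A"
proof
  assume "\<forall>b\<in>A. dist x a \<le> dist x b"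
  then have "dist x a \<le> infdist x A"
    using assms by (subst infdist_notempty) (auto intro!: cINF_greatest)
  then show "dist x a = infdist x A" using infdist_le[OF assms, of x] by linarith
qed (use infdist_le in auto)

lemma infdist_closest_point:
  assumes "closed A" "A \<noteq> {}"
  shows "infdist x A = dist x (closest_point A x)"
  using closest_point_exists[OF assms] nearest_iff_infdist by metis

lemma Unp_iff_nearest_unique:
  assumes "closed A" "A \<noteq> {}"
  shows "x \<in> Unp A \<longleftrightarrow> (\<forall>a\<in>A. dist x a = infdist x A \<longrightarrow> a = closest_point A x)"
proof -
  have "\<And>a. (a \<in> A \<and> (\<forall>b\<in>A. dist x a \<le> dist x b)) \<longleftrightarrow> (a \<in> A \<and> dist x a = infdist x A)"
    using nearest_iff_infdist by blast
  then have "x \<in> Unp A \<longleftrightarrow> (\<exists>!a. a \<in> A \<and> dist x a = infdist x A)"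
    unfolding Unp_def by simp
  moreover have "closest_point A x \<in> A" "dist x (closest_point A x) = infdist x A"
    using closest_point_in_set[OF assms] infdist_closest_point[OF assms] by simp_all
  ultimately show ?thesis by blast
qed

lemma ball_infdist_disjoint: "A \<inter> ball x (infdist x A) = {}"
proof -
  have "\<not> dist x y < infdist x A" if "y \<in> A" for y
    using infdist_le[OF that, of x] by simp
  then show ?thesis by auto
qed

lemma nearest_point_in_frontier:
  fixes A :: "'a::real_normed_vector set"
  assumes "x \<notin> A" "a \<in> A" "dist x a = infdist x A"
  shows "a \<in> frontier A"
proof -
  have "x \<noteq> a" using assms(1,2) by blast
  then have "0 < infdist x A" using assms(3) by (metis zero_less_dist_iff)
  then have "a \<in> closure (ball x (infdist x A))" using assms(3) by simp
  moreover have "ball x (infdist x A) \<subseteq> - A" using ball_infdist_disjoint by blast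
  ultimately have "a \<in> closure (- A)" using closure_mono by blast
  then show ?thesis using assms(2) closure_subset by (auto simp: frontier_closures)
qed

lemma reach_ge_iff:
  fixes A :: "'a::euclidean_space set"
  assumes A: "closed A" "A \<noteq> {}" and R: "0 < R"
  shows "ereal R \<le> reach A \<longleftrightarrow> (\<forall>x. infdist x A < R \<longrightarrow> x \<in> Unp A)"
proof
  assume reach: "ereal R \<le> reach A"
  show "\<forall>x. infdist x A < R \<longrightarrow> x \<in> Unp A"
  proof (intro allI impI)
    fix x assume "infdist x A < R"
    define a where "a = closest_point A x"
    have "a \<in> A" "infdist x A = dist x a"
      using closest_point_in_set[OF A] infdist_closest_point[OF A] by (simp_all add: a_def)
    moreover have "reach A \<le> reach_at A a"
      unfolding reach_def by (rule INF_lower[OF \<open>a \<in> A\<close>])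
    moreover have "ereal (dist x a) < ereal R"
      using \<open>infdist x A < R\<close> \<open>infdist x A = dist x a\<close> by simp
    ultimately have "ereal (dist x a) < reach_at A a"
      using reach by (meson less_le_trans order_trans)
    then obtain \<rho> where "ball a \<rho> \<subseteq> Unp A" "dist x a < \<rho>"
      unfolding reach_at_def less_Sup_iff by auto
    then show "x \<in> Unp A" by (auto simp: dist_commute)
  qed
next
  assume unp: "\<forall>x. infdist x A < R \<longrightarrow> x \<in> Unp A"
  have "ball a R \<subseteq> Unp A" if "a \<in> A" for a
  proof
    fix y assume "y \<in> ball a R"
    then have "infdist y A < R" using infdist_le[OF that, of y] by (simp add: dist_commute)
    then show "y \<in> Unp A" using unp by blast
  qed
  then show "ereal R \<le> reach A"
    unfolding reach_def reach_at_def using R by (auto intro!: INF_greatest Sup_upper)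
qed

lemma infdist_ray_shrink:
  assumes b: "b \<in> A" and u: "norm u = 1" and t: "infdist (b + t *\<^sub>R u) A = t" "0 \<le> t'" "t' \<le> t"
  shows "infdist (b + t' *\<^sub>R u) A = t'"
proof -
  have "dist (b + t *\<^sub>R u) (b + t' *\<^sub>R u) = t - t'"
    using u t(3) by (simp add: dist_norm flip: scaleR_diff_left)
  then have "t \<le> infdist (b + t' *\<^sub>R u) A + (t - t')"
    using infdist_triangle[of "b + t *\<^sub>R u" A "b + t' *\<^sub>R u"] t(1) by simp
  moreover have "infdist (b + t' *\<^sub>R u) A \<le> t'"
    using infdist_le[OF b, of "b + t' *\<^sub>R u"] u t(2) by (simp add: dist_norm)
  ultimately show ?thesis by linarith
qed

section \<open>Balls touching a point\<close>

lemma inner_sgn_left: "inner (sgn x) v = inner x v / norm x"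
  by (simp add: sgn_div_norm divide_inverse mult.commute)

lemma inner_sgn_right: "inner v (sgn x) = inner v x / norm x"
  by (simp add: sgn_div_norm divide_inverse mult.commute)

lemma norm_sgn_diff_le:
  fixes x y :: "'a::real_normed_vector"
  assumes "y \<noteq> 0"
  shows "norm (sgn x - sgn y) \<le> 2 * norm (x - y) / norm y"
proof (cases "x = 0")
  case True
  then show ?thesis using assms by (simp add: norm_sgn)
next
  case False
  define c where "c = 1 / norm x - 1 / norm y"
  have "sgn x - sgn y = c *\<^sub>R x + (1 / norm y) *\<^sub>R (x - y)"
    unfolding c_def sgn_div_norm by (simp add: scaleR_diff_left scaleR_diff_right divide_inverse)
  then have "norm (sgn x - sgn y) \<le> norm (c *\<^sub>R x) + norm ((1 / norm y) *\<^sub>R (x - y))"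
    by (metis norm_triangle_ineq)
  also have "norm (c *\<^sub>R x) = \<bar>c * norm x\<bar>"
    by (simp add: abs_mult)
  also have "c * norm x = (norm y - norm x) / norm y"
    using False assms by (simp add: c_def field_simps)
  also have "norm ((1 / norm y) *\<^sub>R (x - y)) = norm (x - y) / norm y"
    by simp
  finally have "norm (sgn x - sgn y) \<le> (\<bar>norm y - norm x\<bar> + norm (x - y)) / norm y"
    by (simp add: abs_divide add_divide_distrib)
  moreover have "\<bar>norm y - norm x\<bar> \<le> norm (x - y)"
    by (metis norm_minus_commute norm_triangle_ineq3)
  ultimately have "norm (sgn x - sgn y) \<le> (norm (x - y) + norm (x - y)) / norm y"
    by (meson add_right_mono divide_right_mono norm_ge_zero order_trans)
  then show ?thesis by simp
qed

lemma dist_tangent_center_sq: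
  fixes v :: "'a::real_inner"
  assumes "norm v = 1"
  shows "(dist y (a + s *\<^sub>R v))^2 = (norm (y - a))^2 - 2 * s * inner (y - a) v + s^2"
proof -
  have "y - (a + s *\<^sub>R v) = (y - a) - s *\<^sub>R v" by simp
  then show ?thesis
    using assms by (simp add: dist_norm power2_norm_eq_inner norm_eq_1 inner_diff_left
        inner_diff_right inner_commute algebra_simps flip: power2_eq_square)
qed

lemma mem_tangent_ball_iff:
  fixes v :: "'a::real_inner"
  assumes "norm v = 1" "0 \<le> s"
  shows "y \<in> ball (a + s *\<^sub>R v) s \<longleftrightarrow> (norm (y - a))^2 < 2 * s * inner (y - a) v"
proof -
  have "y \<in> ball (a + s *\<^sub>R v) s \<longleftrightarrow> (dist y (a + s *\<^sub>R v))^2 < s^2"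
    using assms(2) by (simp add: dist_commute) (metis not_le power_mono_iff zero_le_dist zero_less_numeral)
  then show ?thesis using dist_tangent_center_sq[OF assms(1)] by simp
qed

lemma mem_tangent_cball_iff:
  fixes v :: "'a::real_inner"
  assumes "norm v = 1" "0 \<le> s"
  shows "y \<in> cball (a + s *\<^sub>R v) s \<longleftrightarrow> (norm (y - a))^2 \<le> 2 * s * inner (y - a) v"
proof -
  have "y \<in> cball (a + s *\<^sub>R v) s \<longleftrightarrow> (dist y (a + s *\<^sub>R v))^2 \<le> s^2"
    using assms(2) by (simp add: dist_commute)
  then show ?thesis using dist_tangent_center_sq[OF assms(1)] by simp
qed

lemma cball_subset_tangent_ball:
  fixes v :: "'a::real_inner"
  assumes v: "norm v = 1" and "0 < s" "s < R"
  shows "cball (a + s *\<^sub>R v) s \<subseteq> insert a (ball (a + R *\<^sub>R v) R)"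
proof
  fix y assume "y \<in> cball (a + s *\<^sub>R v) s"
  then have y: "(norm (y - a))^2 \<le> 2 * s * inner (y - a) v"
    using mem_tangent_cball_iff[OF v] \<open>0 < s\<close> by simp
  show "y \<in> insert a (ball (a + R *\<^sub>R v) R)"
  proof (cases "y = a")
    case False
    then have "0 < (norm (y - a))^2" by simp
    then have "0 < 2 * s * inner (y - a) v" using y by linarith
    then have "0 < inner (y - a) v" using \<open>0 < s\<close> by (simp add: zero_less_mult_iff)
    then have "2 * s * inner (y - a) v < 2 * R * inner (y - a) v"
      using \<open>s < R\<close> by simp
    then have "(norm (y - a))^2 < 2 * R * inner (y - a) v"
      using y by linarith
    then show ?thesis using mem_tangent_ball_iff[OF v] \<open>0 < s\<close> \<open>s < R\<close> by simp
  qed simp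
qed

lemma inner_bound_outside_normal_ball:
  fixes a b x :: "'a::real_inner"
  assumes "0 < dist x b" "dist x b \<le> R" and out: "a \<notin> ball (b + R *\<^sub>R sgn (x - b)) R"
  shows "(norm (b - a))^2 \<le> 2 * inner (b - a) (x - a)"
proof -
  define d where "d = b - a"
  have n: "norm (sgn (x - b)) = 1" using assms(1) by (simp add: norm_sgn)
  have R: "0 < R" using assms(1,2) by linarith
  have "2 * R * inner (a - b) (sgn (x - b)) \<le> (norm (a - b))^2"
    using out mem_tangent_ball_iff[OF n, of R a b] R by simp
  then have "2 * R * (inner (a - b) (x - b) / dist x b) \<le> (norm d)^2"
    by (simp add: inner_sgn_right dist_norm d_def norm_minus_commute)
  then have "2 * R * inner (a - b) (x - b) \<le> dist x b * (norm d)^2"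
    using assms(1) by (simp add: field_simps)
  also have "\<dots> \<le> R * (norm d)^2" using assms(2) by (simp add: mult_right_mono)
  finally have "2 * R * ((norm d)^2 - inner d (x - a)) \<le> R * (norm d)^2"
    by (simp add: d_def power2_norm_eq_inner inner_diff_left inner_diff_right inner_commute algebra_simps)
  then have "R * (norm d)^2 \<le> R * (2 * inner d (x - a))" by (simp add: algebra_simps)
  then show ?thesis using R d_def by simp
qed

lemma ray_point_eq_if_far:
  fixes b u y :: "'a::real_inner"
  assumes u: "norm u = 1" and "0 < T"
    and near: "dist y (b + T *\<^sub>R u) \<le> \<tau>" and far: "T + \<tau> \<le> dist y b"
  shows "y = b + (T + \<tau>) *\<^sub>R u"
proof -
  define z where "z = b + T *\<^sub>R u"
  have zb: "z - b = T *\<^sub>R u" "dist z b = T" using u \<open>0 < T\<close> by (simp_all add: z_def dist_norm)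
  have "dist y z = \<tau>" and "dist y b = dist y z + dist z b"
    using near far dist_triangle[of y b z] zb(2) by (simp_all add: z_def)
  then have "norm (y - z) *\<^sub>R (z - b) = norm (z - b) *\<^sub>R (y - z)"
    using dist_triangle_eq[of y b z] by simp
  then have "T *\<^sub>R (y - z) = T *\<^sub>R (\<tau> *\<^sub>R u)"
    using zb \<open>dist y z = \<tau>\<close> by (simp add: dist_norm mult.commute)
  moreover have "T \<noteq> 0" using \<open>0 < T\<close> by simp
  ultimately have "y - z = \<tau> *\<^sub>R u" by (meson scaleR_cancel_left)
  then show ?thesis by (simp add: z_def scaleR_add_left algebra_simps)
qed

lemma ball_disjoint_if_approximable:
  fixes a v :: "'a::real_normed_vector"
  assumes R: "0 < R"
    and approx: "\<And>e. 0 < e \<Longrightarrow>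
      \<exists>b c. dist b a < e \<and> dist c v < e \<and> A \<inter> ball (b + R *\<^sub>R c) R = {}"
  shows "A \<inter> ball (a + R *\<^sub>R v) R = {}"
proof (rule ccontr)
  assume "A \<inter> ball (a + R *\<^sub>R v) R \<noteq> {}"
  then obtain y where y: "y \<in> A" "dist (a + R *\<^sub>R v) y < R" by auto
  define e where "e = (R - dist (a + R *\<^sub>R v) y) / (1 + R)"
  have "0 < e" using y(2) R by (simp add: e_def)
  then obtain b c where bc: "dist b a < e" "dist c v < e" "A \<inter> ball (b + R *\<^sub>R c) R = {}"
    using approx by blast
  have "dist (b + R *\<^sub>R c) (a + R *\<^sub>R v) = norm ((b - a) + R *\<^sub>R (c - v))"
    by (simp add: dist_norm algebra_simps)
  also have "\<dots> \<le> norm (b - a) + norm (R *\<^sub>R (c - v))"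
    by (rule norm_triangle_ineq)
  also have "\<dots> = dist b a + R * dist c v"
    using R by (simp add: dist_norm)
  also have "\<dots> < e + R * e" using bc(1,2) R by (simp add: add_strict_mono)
  also have "e + R * e = e * (1 + R)" by (simp add: algebra_simps)
  also have "\<dots> = R - dist (a + R *\<^sub>R v) y" using R by (simp add: e_def)
  finally have "dist (b + R *\<^sub>R c) y < R"
    using dist_triangle[of "b + R *\<^sub>R c" y "a + R *\<^sub>R v"] by linarith
  then show False using bc(3) y(1) by auto
qed

section \<open>Tangent and normal cones\<close>

lemma Tan_if_directions_converge:
  assumes A: "\<And>n. x n \<in> A" and ne: "\<And>n. x n \<noteq> a"
    and lim: "x \<longlonglongrightarrow> a" and dir: "(\<lambda>n. sgn (x n - a)) \<longlonglongrightarrow> w"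
  shows "w \<in> Tan A a"
  unfolding Tan_def mem_Collect_eq
proof (intro allI impI)
  fix \<epsilon> :: real assume "\<epsilon> > 0"
  then have "eventually (\<lambda>n. dist (x n) a < \<epsilon> \<and> dist (sgn (x n - a)) w < \<epsilon>) sequentially"
    using lim dir by (auto intro: eventually_conj tendstoD)
  then obtain n where n: "dist (x n) a < \<epsilon>" "dist (sgn (x n - a)) w < \<epsilon>"
    unfolding eventually_sequentially by blast
  moreover have "sgn (x n - a) = (1 / norm (x n - a)) *\<^sub>R (x n - a)" "1 / norm (x n - a) > 0"
    using ne by (simp_all add: sgn_div_norm divide_inverse)
  ultimately show "\<exists>y\<in>A. norm (y - a) < \<epsilon> \<and> (\<exists>r>0. norm (r *\<^sub>R (y - a) - w) < \<epsilon>)"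
    using A[of n] by (intro bexI[of _ "x n"] conjI exI[of _ "1 / norm (x n - a)"]) (simp_all add: dist_norm)
qed

lemma Tan_obtain_direction:
  assumes w: "w \<in> Tan A a" "w \<noteq> 0" and e: "e > 0"
  obtains x where "x \<in> A" "x \<noteq> a" "norm (x - a) < e" "norm (sgn (x - a) - sgn w) < e"
proof -
  define \<epsilon> where "\<epsilon> = min e (min (norm w) (norm w * e / 2))"
  have \<epsilon>: "\<epsilon> > 0" "\<epsilon> \<le> e" "\<epsilon> \<le> norm w" "\<epsilon> \<le> norm w * e / 2"
    using w(2) e by (auto simp: \<epsilon>_def)
  obtain x r where x: "x \<in> A" "norm (x - a) < \<epsilon>" "r > 0" "norm (r *\<^sub>R (x - a) - w) < \<epsilon>"
    using w(1) \<epsilon>(1) unfolding Tan_def by blast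
  have "x \<noteq> a" using x(4) \<epsilon>(3) by auto
  have "norm (sgn (x - a) - sgn w) = norm (sgn (r *\<^sub>R (x - a)) - sgn w)"
    using x(3) by (simp add: sgn_scaleR)
  also have "\<dots> \<le> 2 * norm (r *\<^sub>R (x - a) - w) / norm w"
    by (rule norm_sgn_diff_le[OF w(2)])
  also have "\<dots> < e"
    using x(4) \<epsilon>(4) w(2) by (simp add: field_simps)
  finally show ?thesis
    using that x(1,2) \<open>x \<noteq> a\<close> \<epsilon>(2) by simp
qed

lemma Nor_if_ball_disjoint:
  assumes v: "norm v = 1" and s: "s > 0" and disj: "A \<inter> ball (a + s *\<^sub>R v) s = {}"
  shows "v \<in> Nor A a"
  unfolding Nor_def mem_Collect_eq
proof (intro ballI, rule ccontr)
  fix w assume w: "w \<in> Tan A a" and pos: "\<not> inner v w \<le> 0"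
  then have "w \<noteq> 0" by auto
  define \<eta> where "\<eta> = inner (sgn w) v"
  have "\<eta> = inner v w / norm w"
    unfolding \<eta>_def inner_sgn_left by (simp add: inner_commute)
  then have \<eta>: "\<eta> > 0"
    using pos \<open>w \<noteq> 0\<close> by simp
  obtain x where x: "x \<in> A" "x \<noteq> a" "norm (x - a) < s * \<eta>"
      "norm (sgn (x - a) - sgn w) < \<eta> / 2"
    using Tan_obtain_direction[OF w \<open>w \<noteq> 0\<close>, of "min (s * \<eta>) (\<eta> / 2)"] s \<eta> by auto
  have "inner (sgn (x - a)) v = \<eta> + inner (sgn (x - a) - sgn w) v"
    by (simp add: \<eta>_def inner_diff_left)
  moreover have "\<bar>inner (sgn (x - a) - sgn w) v\<bar> \<le> norm (sgn (x - a) - sgn w)"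
    using Cauchy_Schwarz_ineq2[of "sgn (x - a) - sgn w" v] v by simp
  ultimately have "inner (sgn (x - a)) v > \<eta> / 2"
    using x(4) by linarith
  have "x \<notin> ball (a + s *\<^sub>R v) s" using disj x(1) by blast
  then have "2 * s * inner (x - a) v \<le> (norm (x - a))^2"
    using mem_tangent_ball_iff[OF v] s by simp
  then have "2 * s * inner (sgn (x - a)) v \<le> norm (x - a)"
    using x(2) by (simp add: inner_sgn_left field_simps power2_eq_square)
  moreover have "s * \<eta> < s * (2 * inner (sgn (x - a)) v)"
    using \<open>inner (sgn (x - a)) v > \<eta> / 2\<close> s by (intro mult_strict_left_mono) auto
  ultimately have "s * \<eta> < norm (x - a)" by simp
  then show False using x(3) by simp
qed

lemma NR_subset_Nor:
  assumes "0 < R"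
  shows "NR R A a \<subseteq> Nor A a \<inter> sphere 0 1"
  using Nor_if_ball_disjoint[OF _ assms] by (auto simp: NR_def)

lemma Nor_inner_bound_near:
  assumes v: "v \<in> Nor A a" and \<eta>: "\<eta> > 0"
  shows "\<exists>\<delta>>0. \<forall>x\<in>A. norm (x - a) < \<delta> \<longrightarrow> inner (x - a) v \<le> \<eta> * norm (x - a)"
proof (rule ccontr)
  assume "\<not> (\<exists>\<delta>>0. \<forall>x\<in>A. norm (x - a) < \<delta> \<longrightarrow> inner (x - a) v \<le> \<eta> * norm (x - a))"
  then have "\<forall>n. \<exists>x\<in>A. norm (x - a) < inverse (Suc n) \<and> \<eta> * norm (x - a) < inner (x - a) v"
    by (auto simp: not_le)
  then obtain x where x: "\<And>n. x n \<in> A" "\<And>n. norm (x n - a) < inverse (Suc n)"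
      "\<And>n. \<eta> * norm (x n - a) < inner (x n - a) v"
    by metis
  have ne: "x n \<noteq> a" for n using x(3)[of n] by auto
  have "\<forall>\<^sub>F n in sequentially. norm (x n - a) \<le> inverse (Suc n)"
    by (intro always_eventually allI less_imp_le x(2))
  then have "(\<lambda>n. x n - a) \<longlonglongrightarrow> 0"
    by (rule Lim_null_comparison[OF _ LIMSEQ_inverse_real_of_nat])
  then have lim: "x \<longlonglongrightarrow> a" by (rule LIM_zero_cancel)
  have dir: "\<eta> < inner (sgn (x n - a)) v" for n
    using x(3)[of n] ne[of n] by (simp add: inner_sgn_left field_simps)
  have sph: "\<forall>n. sgn (x n - a) \<in> sphere 0 1" using ne by (simp add: norm_sgn)
  obtain w r where "strict_mono r" "((\<lambda>n. sgn (x n - a)) \<circ> r) \<longlonglongrightarrow> w"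
    using seq_compactE[OF compact_imp_seq_compact[OF compact_sphere] sph] by blast
  then have w: "strict_mono r" "(\<lambda>n. sgn (x (r n) - a)) \<longlonglongrightarrow> w"
    by (simp_all add: comp_def)
  have "w \<in> Tan A a"
    using x(1) ne LIMSEQ_subseq_LIMSEQ[OF lim w(1)] w(2)
    by (intro Tan_if_directions_converge[where x = "x \<circ> r"]) (auto simp: comp_def)
  then have "inner v w \<le> 0" using v unfolding Nor_def by blast
  have "\<exists>N. \<forall>n\<ge>N. \<eta> \<le> inner (sgn (x (r n) - a)) v"
    using dir less_imp_le by blast
  then have "\<eta> \<le> inner w v"
    by (rule LIMSEQ_le_const[OF tendsto_inner[OF w(2) tendsto_const]])
  then show False using \<eta> \<open>inner v w \<le> 0\<close> inner_commute[of v w] by linarith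
qed

lemma Unp_if_Nor_sphere_subset_NR:
  fixes A :: "'a::euclidean_space set"
  assumes A: "closed A" "A \<noteq> {}"
    and Nor: "\<And>a. a \<in> frontier A \<Longrightarrow> Nor A a \<inter> sphere 0 1 \<subseteq> NR R A a"
    and x: "infdist x A < R"
  shows "x \<in> Unp A"
  unfolding Unp_iff_nearest_unique[OF A]
proof (intro ballI impI)
  fix a assume a: "a \<in> A" "dist x a = infdist x A"
  define c where "c = closest_point A x"
  have c: "c \<in> A" "dist x c = infdist x A"
    using closest_point_in_set[OF A] infdist_closest_point[OF A] by (simp_all add: c_def)
  show "a = closest_point A x"
  proof (cases "x \<in> A")
    case True
    then show ?thesis using a c by (simp add: c_def)
  next
    case False
    define s where "s = infdist x A"
    define u where "u = sgn (x - a)"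
    have "x \<noteq> a" using False a(1) by blast
    then have "0 < s" "s < R" using a(2) x by (simp_all add: s_def flip: zero_less_dist_iff)
    have u: "norm u = 1" and x_eq: "x = a + s *\<^sub>R u"
      using \<open>x \<noteq> a\<close> \<open>0 < s\<close> a(2) by (simp_all add: u_def s_def norm_sgn sgn_div_norm dist_norm)
    have "A \<inter> ball (a + s *\<^sub>R u) s = {}"
      unfolding x_eq[symmetric] unfolding s_def by (rule ball_infdist_disjoint)
    then have "u \<in> Nor A a" by (rule Nor_if_ball_disjoint[OF u \<open>0 < s\<close>])
    then have "u \<in> NR R A a"
      using Nor[OF nearest_point_in_frontier[OF False a]] u by auto
    then have "c \<notin> ball (a + R *\<^sub>R u) R" using c(1) by (auto simp: NR_def)
    moreover have "c \<in> cball (a + s *\<^sub>R u) s"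
      unfolding x_eq[symmetric] using c(2) by (simp add: s_def)
    ultimately have "c = a"
      using cball_subset_tangent_ball[OF u \<open>0 < s\<close> \<open>s < R\<close>, of a] by blast
    then show ?thesis by (simp add: c_def)
  qed
qed

section \<open>Unique nearest points within distance \<open>R\<close>\<close>

lemma continuous_on_closest_point_Unp:
  fixes A :: "'a::euclidean_space set"
  assumes A: "closed A" "A \<noteq> {}" and K: "compact K" "K \<subseteq> Unp A"
  shows "continuous_on K (closest_point A)"
proof -
  obtain B where B: "\<And>x. x \<in> K \<Longrightarrow> norm x \<le> B"
    using compact_imp_bounded[OF K(1)] by (auto simp: bounded_iff)
  obtain a0 where a0: "a0 \<in> A" using A(2) by blast
  have "closest_point A x \<in> cball 0 (2 * B + norm a0)" if "x \<in> K" for x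
  proof -
    have "dist x (closest_point A x) \<le> dist x a0" by (rule closest_point_le[OF A(1) a0])
    then have "norm (closest_point A x) \<le> 2 * norm x + norm a0"
      by (simp add: dist_norm) norm
    then show ?thesis using B[OF that] by simp
  qed
  moreover have "closed ((\<lambda>x. (x, closest_point A x)) ` K)"
    unfolding closed_sequential_limits
  proof (intro allI impI, elim conjE)
    fix s l assume s: "\<forall>n. s n \<in> (\<lambda>x. (x, closest_point A x)) ` K" and l: "s \<longlonglongrightarrow> l"
    then have "\<forall>n. \<exists>y. y \<in> K \<and> s n = (y, closest_point A y)"
      by blast
    then obtain x where x: "\<And>n. x n \<in> K" "\<And>n. s n = (x n, closest_point A (x n))"
      by metis
    have lim_x: "x \<longlonglongrightarrow> fst l" and lim_c: "(\<lambda>n. closest_point A (x n)) \<longlonglongrightarrow> snd l"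
      using tendsto_fst[OF l] tendsto_snd[OF l] by (simp_all add: x(2))
    have "fst l \<in> K"
      using x(1) by (intro closed_sequentially[OF compact_imp_closed[OF K(1)] _ lim_x]) auto
    moreover have "snd l \<in> A"
      using closest_point_in_set[OF A] by (intro closed_sequentially[OF A(1) _ lim_c]) auto
    moreover have "(\<lambda>n. infdist (x n) A) \<longlonglongrightarrow> dist (fst l) (snd l)"
      using tendsto_dist[OF lim_x lim_c] by (simp add: infdist_closest_point[OF A])
    then have "dist (fst l) (snd l) = infdist (fst l) A"
      using LIMSEQ_unique tendsto_infdist[OF lim_x] by blast
    ultimately have "snd l = closest_point A (fst l)"
      using K(2) Unp_iff_nearest_unique[OF A] by blast
    then show "l \<in> (\<lambda>x. (x, closest_point A x)) ` K"
      using \<open>fst l \<in> K\<close> by (intro image_eqI[where x = "fst l"]) (simp_all add: prod_eq_iff)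
  qed
  ultimately show ?thesis
    by (intro continuous_from_closed_graph[OF compact_cball[of 0 "2 * B + norm a0"]]) auto
qed

locale reach_at_least =
  fixes A :: "'a::euclidean_space set" and R :: real
  assumes closed: "closed A" and nonempty: "A \<noteq> {}" and R_pos: "0 < R"
    and Unp: "\<And>x. infdist x A < R \<Longrightarrow> x \<in> Unp A"
begin

lemma far_point_near_ray_exists:
  assumes b: "b \<in> A" and u: "norm u = 1" and T: "infdist (b + T *\<^sub>R u) A = T"
    and \<tau>: "0 < \<tau>" "2 * \<tau> < T" "T + \<tau> < R"
  obtains y where "dist (b + T *\<^sub>R u) y \<le> \<tau>" "T + \<tau> \<le> infdist y A"
proof -
  define z where "z = b + T *\<^sub>R u"
  have "dist z b = T" using u \<tau> by (simp add: z_def dist_norm)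
  have far: "\<tau> < infdist y A" if "y \<in> cball z \<tau>" for y
    using infdist_triangle[of z A y] that T \<tau>(2) by (simp add: z_def dist_commute)
  have "cball z \<tau> \<subseteq> Unp A"
  proof
    fix y assume "y \<in> cball z \<tau>"
    then have "infdist y A < R"
      using infdist_le[OF b, of y] dist_triangle[of y b z] \<open>dist z b = T\<close> \<tau>(3)
      by (simp add: dist_commute)
    then show "y \<in> Unp A" by (rule Unp)
  qed
  then have "continuous_on (cball z \<tau>) (closest_point A)"
    by (intro continuous_on_closest_point_Unp closed nonempty compact_cball)
  then have cont: "continuous_on (cball z \<tau>)
      (\<lambda>y. z + (\<tau> / infdist y A) *\<^sub>R (y - closest_point A y))"
    using \<tau>(1) by (intro continuous_intros) (auto dest: far)
  have "z + (\<tau> / infdist y A) *\<^sub>R (y - closest_point A y) \<in> cball z \<tau>" if "y \<in> cball z \<tau>" for y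
    using far[OF that] \<tau>(1)
    by (simp add: dist_norm infdist_closest_point[OF closed nonempty])
  \<comment> \<open>At a fixed point \<open>y\<close>, the point \<open>z\<close> lies on the segment from the nearest point of \<open>y\<close>
    to \<open>y\<close>, at distance \<open>\<tau>\<close> from \<open>y\<close>.\<close>
  then obtain y where y: "y \<in> cball z \<tau>"
    and fix_y: "z + (\<tau> / infdist y A) *\<^sub>R (y - closest_point A y) = y"
    using brouwer_ball[OF \<tau>(1) cont] by auto
  define c where "c = closest_point A y"
  define d where "d = infdist y A"
  have c: "c \<in> A" "d = dist y c"
    using closest_point_in_set[OF closed nonempty] infdist_closest_point[OF closed nonempty]
    by (simp_all add: c_def d_def)
  have "\<tau> < d" using far[OF y] by (simp add: d_def)
  have "z - c = (1 - \<tau> / d) *\<^sub>R (y - c)"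
    using fix_y by (simp add: c_def d_def algebra_simps)
  moreover have "0 < 1 - \<tau> / d" using \<open>\<tau> < d\<close> \<tau>(1) by simp
  ultimately have "dist z c = (1 - \<tau> / d) * d"
    using c(2) by (simp add: dist_norm)
  also have "\<dots> = d - \<tau>" using \<open>\<tau> < d\<close> \<tau>(1) by (simp add: field_simps)
  finally have "T + \<tau> \<le> d"
    using infdist_le[OF c(1), of z] T by (simp add: z_def)
  then show ?thesis using that y by (simp add: z_def d_def)
qed

lemma infdist_ray_extend:
  assumes b: "b \<in> A" and u: "norm u = 1" and T: "infdist (b + T *\<^sub>R u) A = T"
    and \<tau>: "0 < \<tau>" "2 * \<tau> < T" "T + \<tau> < R"
  shows "infdist (b + (T + \<tau>) *\<^sub>R u) A = T + \<tau>"
proof -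
  obtain y where y: "dist (b + T *\<^sub>R u) y \<le> \<tau>" "T + \<tau> \<le> infdist y A"
    using far_point_near_ray_exists[OF b u T \<tau>] by blast
  moreover have "infdist y A \<le> dist y b" by (rule infdist_le[OF b])
  ultimately have "y = b + (T + \<tau>) *\<^sub>R u"
    using \<tau> by (intro ray_point_eq_if_far[OF u]) (auto simp: dist_commute)
  moreover have "dist y b \<le> T + \<tau>"
    using y(1) dist_triangle[of y b "b + T *\<^sub>R u"] u \<tau> by (simp add: dist_commute dist_norm)
  ultimately show ?thesis
    using y(2) \<open>infdist y A \<le> dist y b\<close> by simp
qed

lemma infdist_ray:
  assumes b: "b \<in> A" and u: "norm u = 1" and s: "0 < s" "s < R"
    and d: "infdist (b + s *\<^sub>R u) A = s" and t: "0 \<le> t" "t < R"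
  shows "infdist (b + t *\<^sub>R u) A = t"
proof (cases "t \<le> s")
  case True
  then show ?thesis using infdist_ray_shrink[OF b u d t(1)] by simp
next
  case False
  define S where "S = {0..t} \<inter> {r. infdist (b + r *\<^sub>R u) A = r}"
  have "closed S"
    unfolding S_def by (intro closed_Int closed_atLeastAtMost closed_Collect_eq continuous_intros)
  moreover have "s \<in> S" using s d False by (simp add: S_def)
  moreover have bdd: "bdd_above S" unfolding S_def by (intro bdd_above_Int1 bdd_above_Icc)
  ultimately have "Sup S \<in> S" "s \<le> Sup S"
    using closed_contains_Sup cSup_upper by blast+
  define T where "T = Sup S"
  have T: "0 \<le> T" "T \<le> t" "infdist (b + T *\<^sub>R u) A = T" "0 < T"
    using \<open>Sup S \<in> S\<close> \<open>s \<le> Sup S\<close> s by (auto simp: S_def T_def)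
  have "T = t"
  proof (rule ccontr)
    assume "T \<noteq> t"
    define \<tau> where "\<tau> = min (T / 3) (t - T)"
    have \<tau>: "0 < \<tau>" "2 * \<tau> < T" "T + \<tau> \<le> t"
      using T \<open>T \<noteq> t\<close> by (auto simp: \<tau>_def min_def)
    then have "infdist (b + (T + \<tau>) *\<^sub>R u) A = T + \<tau>"
      using infdist_ray_extend[OF b u T(3)] t(2) by simp
    then have "T + \<tau> \<in> S" using \<tau> T by (simp add: S_def)
    then have "T + \<tau> \<le> T" using cSup_upper[OF _ bdd] unfolding T_def by blast
    then show False using \<tau>(1) by simp
  qed
  then show ?thesis using T(3) by simp
qed

lemma ray_ball_disjoint:
  assumes b: "b \<in> A" and u: "norm u = 1" and s: "0 < s" "s < R"
    and d: "infdist (b + s *\<^sub>R u) A = s"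
  shows "A \<inter> ball (b + R *\<^sub>R u) R = {}"
proof -
  have "ball (b + R *\<^sub>R u) R \<subseteq> (\<Union>t\<in>{0..<R}. ball (b + t *\<^sub>R u) t)"
  proof
    fix y assume "y \<in> ball (b + R *\<^sub>R u) R"
    define \<delta> where "\<delta> = dist (b + R *\<^sub>R u) y"
    define t where "t = (3 * R + \<delta>) / 4"
    have "0 \<le> \<delta>" "\<delta> < R" using \<open>y \<in> ball (b + R *\<^sub>R u) R\<close> by (simp_all add: \<delta>_def)
    then have t: "0 \<le> t" "t < R" "R - t + \<delta> < t" unfolding t_def by (simp_all add: field_simps)
    have "dist (b + t *\<^sub>R u) (b + R *\<^sub>R u) = R - t"
      using u t(2) by (simp add: dist_norm flip: scaleR_diff_left)
    then have "dist (b + t *\<^sub>R u) y < t"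
      using dist_triangle[of "b + t *\<^sub>R u" y "b + R *\<^sub>R u"] t(3) by (simp add: \<delta>_def)
    moreover have "t \<in> {0..<R}" using t by simp
    ultimately show "y \<in> (\<Union>t\<in>{0..<R}. ball (b + t *\<^sub>R u) t)" by auto
  qed
  moreover have "A \<inter> ball (b + t *\<^sub>R u) t = {}" if "t \<in> {0..<R}" for t
    using ball_infdist_disjoint[of A "b + t *\<^sub>R u"] infdist_ray[OF b u s d] that by simp
  ultimately show ?thesis by blast
qed

lemma normal_ball_disjoint:
  assumes x: "x \<notin> A" "infdist x A < R"
  shows "A \<inter> ball (closest_point A x + R *\<^sub>R sgn (x - closest_point A x)) R = {}"
proof -
  define c where "c = closest_point A x"
  have c: "c \<in> A" "infdist x A = dist x c"
    using closest_point_in_set[OF closed nonempty] infdist_closest_point[OF closed nonempty]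
    by (simp_all add: c_def)
  have "0 < infdist x A" by (rule infdist_pos_not_in_closed[OF closed nonempty x(1)])
  have "x - c \<noteq> 0" using c(1) x(1) by auto
  then have u: "norm (sgn (x - c)) = 1" and x_eq: "c + infdist x A *\<^sub>R sgn (x - c) = x"
    using c(2) by (simp_all add: norm_sgn sgn_div_norm dist_norm)
  have "A \<inter> ball (c + R *\<^sub>R sgn (x - c)) R = {}"
    by (rule ray_ball_disjoint[OF c(1) u \<open>0 < infdist x A\<close> x(2)]) (simp add: x_eq)
  then show ?thesis by (simp add: c_def)
qed

lemma NR_nonempty:
  assumes a: "a \<in> frontier A"
  shows "NR R A a \<noteq> {}"
proof -
  have "a \<in> A" using a closed frontier_subset_closed by blast
  have "a \<in> closure (- A)" using a by (simp add: frontier_closures)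
  then obtain x where x: "\<And>n. x n \<notin> A" "x \<longlonglongrightarrow> a"
    by (auto simp: closure_sequential)
  define u where "u n = sgn (x n - closest_point A (x n))" for n
  have "x n - closest_point A (x n) \<noteq> 0" for n
    using x(1)[of n] closest_point_in_set[OF closed nonempty, of "x n"] by auto
  then have sph: "\<forall>n. u n \<in> sphere 0 1" by (simp add: u_def norm_sgn)
  obtain w r where w: "w \<in> sphere 0 1" "strict_mono r" "(u \<circ> r) \<longlonglongrightarrow> w"
    using seq_compactE[OF compact_imp_seq_compact[OF compact_sphere] sph] by blast
  have "A \<inter> ball (a + R *\<^sub>R w) R = {}"
  proof (rule ball_disjoint_if_approximable[OF R_pos])
    fix e :: real assume "0 < e"
    have "(\<lambda>n. x (r n)) \<longlonglongrightarrow> a"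
      using LIMSEQ_subseq_LIMSEQ[OF x(2) w(2)] by (simp add: comp_def)
    moreover have "0 < min R (e / 2)" using \<open>0 < e\<close> R_pos by simp
    ultimately have "\<forall>\<^sub>F n in sequentially. dist (x (r n)) a < min R (e / 2)"
      by (rule tendstoD)
    moreover have "\<forall>\<^sub>F n in sequentially. dist (u (r n)) w < e"
      using tendstoD[OF w(3) \<open>0 < e\<close>] by (simp add: comp_def)
    ultimately have "\<forall>\<^sub>F n in sequentially. dist (x (r n)) a < min R (e / 2) \<and> dist (u (r n)) w < e"
      by (rule eventually_conj)
    then obtain n where n: "dist (x (r n)) a < min R (e / 2)" "dist (u (r n)) w < e"
      unfolding eventually_sequentially by blast
    define y where "y = x (r n)"
    have "dist y a < R" "dist y a < e / 2" using n(1) by (simp_all add: y_def)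
    moreover have "infdist y A \<le> dist y a" by (rule infdist_le[OF \<open>a \<in> A\<close>])
    moreover have "dist (closest_point A y) y = infdist y A"
      using infdist_closest_point[OF closed nonempty] by (simp add: dist_commute)
    ultimately have "dist (closest_point A y) a < e" "infdist y A < R"
      using dist_triangle[of "closest_point A y" a y] by linarith+
    moreover have "A \<inter> ball (closest_point A y + R *\<^sub>R u (r n)) R = {}"
      using normal_ball_disjoint[OF x(1) \<open>infdist y A < R\<close>[unfolded y_def]]
      by (simp add: y_def u_def)
    ultimately show "\<exists>b c. dist b a < e \<and> dist c w < e \<and> A \<inter> ball (b + R *\<^sub>R c) R = {}"
      using n(2) by blast
  qed
  then have "w \<in> NR R A a" using w(1) by (simp add: NR_def)
  then show ?thesis by blast
qed

lemma closest_point_near_normal_ray: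
  assumes a: "a \<in> A" and v: "norm v = 1" and t: "0 < t" "t < R"
    and x: "x = a + t *\<^sub>R v" "x \<notin> A"
    and normal: "\<forall>y\<in>A. norm (y - a) \<le> 2 * t \<longrightarrow> inner (y - a) v \<le> \<eta> * norm (y - a)"
    and \<eta>: "0 \<le> \<eta>"
  shows "norm (closest_point A x - a) \<le> 2 * t * \<eta>"
proof -
  define b where "b = closest_point A x"
  have b: "b \<in> A" "dist x b = infdist x A"
    using closest_point_in_set[OF closed nonempty] infdist_closest_point[OF closed nonempty]
    by (simp_all add: b_def)
  have "infdist x A \<le> t" using infdist_le[OF a, of x] v t(1) by (simp add: x(1) dist_norm)
  moreover have "0 < infdist x A" by (rule infdist_pos_not_in_closed[OF closed nonempty x(2)])
  moreover have "A \<inter> ball (b + R *\<^sub>R sgn (x - b)) R = {}"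
    using normal_ball_disjoint[OF x(2)] \<open>infdist x A \<le> t\<close> t(2) by (simp add: b_def)
  ultimately have "(norm (b - a))^2 \<le> 2 * inner (b - a) (x - a)"
    using a b(2) t(2) by (intro inner_bound_outside_normal_ball[where R = R]) auto
  then have sq: "(norm (b - a))^2 \<le> 2 * t * inner (b - a) v" by (simp add: x(1))
  have "norm (b - a) \<le> 2 * t"
    using dist_triangle[of b a x] b(2) \<open>infdist x A \<le> t\<close> v t(1)
    by (simp add: x(1) dist_norm norm_minus_commute)
  then have "inner (b - a) v \<le> \<eta> * norm (b - a)" using normal b(1) by simp
  then have "2 * t * inner (b - a) v \<le> 2 * t * (\<eta> * norm (b - a))"
    using t(1) by (intro mult_left_mono) auto
  then have "norm (b - a) * norm (b - a) \<le> (2 * t * \<eta>) * norm (b - a)"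
    using sq by (simp add: power2_eq_square mult.assoc)
  then show ?thesis
    using \<eta> t(1) by (cases "b = a") (simp_all add: b_def mult_le_cancel_right)
qed

lemma Nor_sphere_subset_NR:
  assumes a: "a \<in> A"
  shows "Nor A a \<inter> sphere 0 1 \<subseteq> NR R A a"
proof
  fix v assume "v \<in> Nor A a \<inter> sphere 0 1"
  then have v: "v \<in> Nor A a" "norm v = 1" by auto
  have "A \<inter> ball (a + R *\<^sub>R v) R = {}"
  proof (rule ball_disjoint_if_approximable[OF R_pos])
    fix e :: real assume e: "0 < e"
    define \<eta> where "\<eta> = min (1 / 2) (e / 5)"
    have \<eta>: "0 < \<eta>" "\<eta> \<le> 1 / 2" "\<eta> \<le> e / 5" using e by (auto simp: \<eta>_def)
    obtain \<delta> where \<delta>: "0 < \<delta>"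
      "\<forall>y\<in>A. norm (y - a) < \<delta> \<longrightarrow> inner (y - a) v \<le> \<eta> * norm (y - a)"
      using Nor_inner_bound_near[OF v(1) \<eta>(1)] by blast
    define t where "t = min \<delta> (min R e) / 4"
    have t: "0 < t" "2 * t < \<delta>" "t < R" "t < e" using \<delta>(1) R_pos e by (auto simp: t_def)
    have "2 * t * \<eta> \<le> 2 * t * (1 / 2)" using \<eta>(2) t(1) by (intro mult_left_mono) auto
    then have small: "2 * t * \<eta> \<le> t" by simp
    define x where "x = a + t *\<^sub>R v"
    have "x \<notin> A"
    proof
      assume "x \<in> A"
      then have "t \<le> \<eta> * t"
        using \<delta>(2)[rule_format, of x] t v(2) by (simp add: x_def inner_commute norm_eq_1)
      then show False using small t(1) by (simp add: algebra_simps)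
    qed
    define b where "b = closest_point A x"
    have close: "norm (b - a) \<le> 2 * t * \<eta>"
      unfolding b_def using a v(2) t(1,3) x_def \<open>x \<notin> A\<close> \<delta>(2) t(2) \<eta>(1)
      by (intro closest_point_near_normal_ray) auto
    have "sgn (t *\<^sub>R v) = v" using t(1) v(2) by (simp add: sgn_scaleR sgn_div_norm)
    moreover have tv: "t *\<^sub>R v \<noteq> 0" "norm (t *\<^sub>R v) = t" using t(1) v(2) by auto
    ultimately have "norm (sgn (x - b) - v) \<le> 2 * norm ((x - b) - t *\<^sub>R v) / norm (t *\<^sub>R v)"
      using norm_sgn_diff_le[OF tv(1), of "x - b"] by simp
    also have "\<dots> = 2 * norm (b - a) / t"
      using t(1) v(2) by (simp add: x_def norm_minus_commute)
    also have "\<dots> \<le> 4 * \<eta>" using close t(1) by (simp add: field_simps)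
    finally have "dist (sgn (x - b)) v < e" using \<eta>(3) e by (simp add: dist_norm)
    moreover have "dist b a < e"
      using close small t(4) by (simp add: dist_norm)
    moreover have "A \<inter> ball (b + R *\<^sub>R sgn (x - b)) R = {}"
      using normal_ball_disjoint[OF \<open>x \<notin> A\<close>] infdist_le[OF a, of x] v(2) t(1,3)
      by (simp add: b_def x_def dist_norm)
    ultimately show "\<exists>b c. dist b a < e \<and> dist c v < e \<and> A \<inter> ball (b + R *\<^sub>R c) R = {}"
      by blast
  qed
  then show "v \<in> NR R A a" using v(2) by (simp add: NR_def)
qed

end

theorem mainTheorem7:
  fixes A :: "'a::euclidean_space set" and R :: real
  assumes "DIM('a) \<ge> 2" and "R > 0" and "body A"
  shows "(R_supported R A \<and>
          (\<forall>a\<in>frontier A. Nor A a \<inter> sphere 0 1 = NR R A a))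
         \<longleftrightarrow> reach A \<ge> ereal R"
proof -
  have A: "closed A" "A \<noteq> {}" using assms(3) by (auto simp: body_def)
  have "R_supported R A \<and> (\<forall>a\<in>frontier A. Nor A a \<inter> sphere 0 1 = NR R A a)"
    if "\<forall>x. infdist x A < R \<longrightarrow> x \<in> Unp A"
  proof -
    interpret reach_at_least A R using A assms(2) that by unfold_locales auto
    have "Nor A a \<inter> sphere 0 1 = NR R A a" if "a \<in> frontier A" for a
      using that A(1) frontier_subset_closed Nor_sphere_subset_NR NR_subset_Nor[OF assms(2)]
      by (intro subset_antisym) blast+
    then show ?thesis
      using assms(3) NR_nonempty by (simp add: R_supported_def)
  qed
  moreover have "\<forall>x. infdist x A < R \<longrightarrow> x \<in> Unp A"
    if "\<forall>a\<in>frontier A. Nor A a \<inter> sphere 0 1 = NR R A a"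
    using Unp_if_Nor_sphere_subset_NR[OF A] that by blast
  ultimately show ?thesis
    using reach_ge_iff[OF A assms(2)] by blast
qed

end
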